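(* Let $L\in\mathcal L_n$. For $k\in[n]$ let $P_k$ be the $n\times n$ permutation matrix with $(P_k)_{i,j}=1$ iff $L_{i,j}=k$. Then $$\sum_{k=1}^n r(P_k)=\frac{n^2(n^2-1)}{12}.$$ The same identity holds when $P_1,\dots,P_n$ are instead the permutation matrices determined by the rows of $L$ (for row $i$, $(P_i)_{j,k}=1$ iff $L_{i,j}=k$) or by the columns of $L$ (for column $j$, $(P_j)_{i,k}=1$ iff $L_{i,j}=k$).
   Context: Let $[n]=\{1,\dots,n\}$. A Latin square of order $n$ is an $n\times n$ array with entries in $[n]$ in which each symbol occurs exactly once in each row and each column; $\mathcal L_n$ is the set of them. For an $n\times n$ matrix $P$, its corner-sum matrix is $\Sigma(P)_{i,j}=\sum_{a\le i,b\le j}P_{a,b}$ for $i,j\in\{0,\dots,n\}$. For a permutation matrix (or alternating sign matrix) $P$ of order $n$, $r(P)$ denotes its rank in the lattice of $n\times n$ alternating sign matrices under the Bruhat order (whose minimum is the identity $I_n$), namely $r(P)=\sum_{0\le i,j\le n}\big(\min(i,j)-\Sigma(P)_{i,j}\big)$. *)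

theory Defs
  imports Complex_Main
begin

text \<open>Matrices of order n are functions nat => nat => _ indexed by 1..n (rows, columns).\<close>

definition latin_square :: "nat \<Rightarrow> (nat \<Rightarrow> nat \<Rightarrow> nat) \<Rightarrow> bool" where
  "latin_square n L \<longleftrightarrow>
     (\<forall>i\<in>{1..n}. \<forall>j\<in>{1..n}. L i j \<in> {1..n}) \<and>
     (\<forall>i\<in>{1..n}. \<forall>k\<in>{1..n}. \<exists>!j. j \<in> {1..n} \<and> L i j = k) \<and>
     (\<forall>j\<in>{1..n}. \<forall>k\<in>{1..n}. \<exists>!i. i \<in> {1..n} \<and> L i j = k)"

definition corner_sum :: "(nat \<Rightarrow> nat \<Rightarrow> int) \<Rightarrow> nat \<Rightarrow> nat \<Rightarrow> int" where
  "corner_sum P i j = (\<Sum>a\<in>{1..i}. \<Sum>b\<in>{1..j}. P a b)"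

definition asm_rank :: "nat \<Rightarrow> (nat \<Rightarrow> nat \<Rightarrow> int) \<Rightarrow> int" where
  "asm_rank n P = (\<Sum>i\<in>{0..n}. \<Sum>j\<in>{0..n}. int (min i j) - corner_sum P i j)"

definition symbol_matrix :: "(nat \<Rightarrow> nat \<Rightarrow> nat) \<Rightarrow> nat \<Rightarrow> nat \<Rightarrow> nat \<Rightarrow> int" where
  "symbol_matrix L k i j = (if L i j = k then 1 else 0)"

definition row_matrix :: "(nat \<Rightarrow> nat \<Rightarrow> nat) \<Rightarrow> nat \<Rightarrow> nat \<Rightarrow> nat \<Rightarrow> int" where
  "row_matrix L i j k = (if L i j = k then 1 else 0)"

definition col_matrix :: "(nat \<Rightarrow> nat \<Rightarrow> nat) \<Rightarrow> nat \<Rightarrow> nat \<Rightarrow> nat \<Rightarrow> int" where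
  "col_matrix L j i k = (if L i j = k then 1 else 0)"

end

theory Submission
  imports Defs
begin

text \<open>The symbols, the rows and the columns of a Latin square each give n permutation matrices
  whose sum is the all-ones matrix J. Corner sums are linear and the corner sums of J are i j, so
  the ranks add up to n \<Sum> min(i,j) - (\<Sum> i)^2 = n^2(n+1)(2n+1)/6 - n^2(n+1)^2/4,
  which is n^2(n^2-1)/12. Only the sum being J matters, not that the summands are permutation
  matrices.\<close>

lemma corner_sum_sum:
  assumes "finite K"
  shows "corner_sum (\<lambda>a b. \<Sum>k\<in>K. P k a b) i j = (\<Sum>k\<in>K. corner_sum (P k) i j)"
  unfolding corner_sum_def by (subst sum.swap, subst (2) sum.swap) simp

lemma corner_sum_ones:
  assumes "\<forall>a\<in>{1..i}. \<forall>b\<in>{1..j}. P a b = 1"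
  shows "corner_sum P i j = int i * int j"
  using assms by (simp add: corner_sum_def)

lemma sum_asm_rank_sum_ones:
  assumes "finite K" and ones: "\<forall>a\<in>{1..n}. \<forall>b\<in>{1..n}. (\<Sum>k\<in>K. P k a b) = 1"
  shows "(\<Sum>k\<in>K. asm_rank n (P k)) =
    int (card K) * (\<Sum>i\<in>{0..n}. \<Sum>j\<in>{0..n}. int (min i j)) - (\<Sum>i\<in>{0..n}. int i)\<^sup>2"
proof -
  have corner: "(\<Sum>k\<in>K. corner_sum (P k) i j) = int i * int j" if "i \<le> n" "j \<le> n" for i j
    using ones that by (simp add: corner_sum_sum[OF \<open>finite K\<close>, symmetric] corner_sum_ones)
  have "(\<Sum>k\<in>K. asm_rank n (P k)) =
      (\<Sum>i\<in>{0..n}. \<Sum>j\<in>{0..n}. \<Sum>k\<in>K. int (min i j) - corner_sum (P k) i j)"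
    unfolding asm_rank_def by (subst sum.swap, subst (2) sum.swap) simp
  also have "\<dots> = (\<Sum>i\<in>{0..n}. \<Sum>j\<in>{0..n}. int (card K) * int (min i j) - int i * int j)"
    using corner by (intro sum.cong refl) (simp add: sum_subtractf)
  also have "\<dots> = int (card K) * (\<Sum>i\<in>{0..n}. \<Sum>j\<in>{0..n}. int (min i j))
      - (\<Sum>i\<in>{0..n}. \<Sum>j\<in>{0..n}. int i * int j)"
    by (simp add: sum_subtractf sum_distrib_left)
  finally show ?thesis
    by (simp add: power2_eq_square sum_product)
qed

lemma sum_min_atMost:
  "6 * (\<Sum>i\<in>{0..n}. \<Sum>j\<in>{0..n}. int (min i j)) = int n * (int n + 1) * (2 * int n + 1)"
proof (induction n)
  case 0
  then show ?case by simp
next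
  case (Suc n)
  have last_row_col: "(\<Sum>i\<in>{0..Suc n}. \<Sum>j\<in>{0..Suc n}. int (min i j)) =
      (\<Sum>i\<in>{0..n}. \<Sum>j\<in>{0..n}. int (min i j)) + 2 * (\<Sum>i\<in>{0..n}. int i) + (int n + 1)"
    by (simp add: sum.atLeast0_atMost_Suc sum.distrib)
  have "6 * (\<Sum>i\<in>{0..Suc n}. \<Sum>j\<in>{0..Suc n}. int (min i j)) =
      6 * (\<Sum>i\<in>{0..n}. \<Sum>j\<in>{0..n}. int (min i j)) + 6 * (2 * (\<Sum>i\<in>{0..n}. int i))
      + 6 * (int n + 1)"
    unfolding last_row_col by (simp only: distrib_left)
  also have "\<dots> = int n * (int n + 1) * (2 * int n + 1) + 6 * (int n * (int n + 1))
      + 6 * (int n + 1)"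
    unfolding Suc.IH double_gauss_sum ..
  finally show ?case
    by (simp add: algebra_simps)
qed

lemma sum_min_minus_sum_square_eq:
  "12 * (int n * (\<Sum>i\<in>{0..n}. \<Sum>j\<in>{0..n}. int (min i j)) - (\<Sum>i\<in>{0..n}. int i)\<^sup>2)
    = int (n\<^sup>2 * (n\<^sup>2 - 1))"
proof -
  define M where "M = (\<Sum>i\<in>{0..n}. \<Sum>j\<in>{0..n}. int (min i j))"
  define S where "S = (\<Sum>i\<in>{0..n}. int i)"
  have "12 * (int n * M - S\<^sup>2) = 2 * int n * (6 * M) - 3 * (2 * S)\<^sup>2"
    by (simp add: algebra_simps power2_eq_square)
  also have "\<dots> = 2 * int n * (int n * (int n + 1) * (2 * int n + 1)) - 3 * (int n * (int n + 1))\<^sup>2"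
    unfolding M_def S_def sum_min_atMost double_gauss_sum ..
  also have "\<dots> = int n ^ 2 * (int n ^ 2 - 1)"
    by (simp add: algebra_simps power2_eq_square)
  also have "\<dots> = int (n\<^sup>2 * (n\<^sup>2 - 1))"
    by (cases n) (simp_all add: of_nat_diff)
  finally show ?thesis
    unfolding M_def S_def .
qed

lemma sum_asm_rank_sum_ones_closed_form:
  assumes "\<forall>a\<in>{1..n}. \<forall>b\<in>{1..n}. (\<Sum>k\<in>{1..n}. P k a b) = 1"
  shows "real_of_int (\<Sum>k\<in>{1..n}. asm_rank n (P k)) = real (n\<^sup>2 * (n\<^sup>2 - 1)) / 12"
proof -
  have "12 * (\<Sum>k\<in>{1..n}. asm_rank n (P k)) = int (n\<^sup>2 * (n\<^sup>2 - 1))"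
    using sum_asm_rank_sum_ones[OF _ assms] sum_min_minus_sum_square_eq[of n] by simp
  then have "12 * real_of_int (\<Sum>k\<in>{1..n}. asm_rank n (P k)) = real (n\<^sup>2 * (n\<^sup>2 - 1))"
    by (metis of_int_mult of_int_numeral of_int_of_nat_eq)
  then show ?thesis by simp
qed

lemma sum_indicator_unique:
  assumes "finite K" and "\<exists>!k. k \<in> K \<and> Q k"
  shows "(\<Sum>k\<in>K. if Q k then 1 else 0) = (1 :: 'a :: comm_semiring_1)"
proof -
  from assms(2) obtain k0 where "k0 \<in> K" and "\<And>k. k \<in> K \<Longrightarrow> Q k \<longleftrightarrow> k = k0"
    by blast
  then have "(\<Sum>k\<in>K. if Q k then 1 else 0) = (\<Sum>k\<in>K. if k = k0 then 1 else (0 :: 'a))"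
    by (intro sum.cong) auto
  with \<open>finite K\<close> \<open>k0 \<in> K\<close> show ?thesis by simp
qed

lemma latin_square_cell:
  assumes "latin_square n L" and "a \<in> {1..n}" and "b \<in> {1..n}"
  shows "L a b \<in> {1..n}"
    and "\<exists>!i. i \<in> {1..n} \<and> L i a = b"
    and "\<exists>!j. j \<in> {1..n} \<and> L a j = b"
  using assms unfolding latin_square_def by (blast, simp, simp)

theorem mainTheorem13:
  fixes n :: nat and L :: "nat \<Rightarrow> nat \<Rightarrow> nat"
  assumes "latin_square n L"
  shows "real_of_int (\<Sum>k\<in>{1..n}. asm_rank n (symbol_matrix L k))
           = real (n^2 * (n^2 - 1)) / 12
       \<and> real_of_int (\<Sum>i\<in>{1..n}. asm_rank n (row_matrix L i))
           = real (n^2 * (n^2 - 1)) / 12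
       \<and> real_of_int (\<Sum>j\<in>{1..n}. asm_rank n (col_matrix L j))
           = real (n^2 * (n^2 - 1)) / 12"
  using latin_square_cell[OF assms]
  by (intro conjI sum_asm_rank_sum_ones_closed_form ballI)
    (simp_all add: symbol_matrix_def row_matrix_def col_matrix_def sum_indicator_unique)

end
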